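(* Let $(Y,d)$ be a metric space and let $k:Y\times Y\to[0,+\infty)$ be a positive, symmetric, bounded kernel such that $\{k(\cdot,y):y\in Y\}$ is uniformly equicontinuous on $(Y,d)$. Let $\mu$ be a regular Borel probability measure on $Y$ and $\varepsilon>0$. Then there exist $m\in\mathbb{N}$ and points $x_1,\dots,x_m\in Y$ such that the measure $\nu:=\frac1m\sum_{j=1}^m\delta_{x_j}$ satisfies $\sup_{x\in Y}|U^\mu(x)-U^\nu(x)|\le\varepsilon$.
   Context: For a measure $\sigma$ on $Y$ the potential is $U^\sigma(x)=\int_Y k(x,y)\,d\sigma(y)$; $\delta_x$ denotes the Dirac measure at $x$. *)

theory Defs
  imports "HOL-Probability.Probability"
begin

definition regular_borel_measure :: "'a::metric_space measure \<Rightarrow> bool" where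
  "regular_borel_measure M \<longleftrightarrow> sets M = sets borel \<and>
     (\<forall>A \<in> sets borel.
        emeasure M A = (INF U \<in> {U. open U \<and> A \<subseteq> U}. emeasure M U) \<and>
        emeasure M A = (SUP K \<in> {K. compact K \<and> K \<subseteq> A}. emeasure M K))"

definition potential :: "('a \<Rightarrow> 'a \<Rightarrow> real) \<Rightarrow> 'a measure \<Rightarrow> 'a \<Rightarrow> real" where
  "potential k \<sigma> x = (\<integral>y. k x y \<partial>\<sigma>)"

text \<open>Empirical measure (1/m) sum_{j<m} delta_{xs j}.\<close>
definition empirical :: "nat \<Rightarrow> (nat \<Rightarrow> 'a) \<Rightarrow> 'a measure" where
  "empirical m xs = measure_pmf (pmf_of_multiset (mset (map xs [0..<m])))"

end

(*
  Inner regularity gives a compact set K carrying all but a small part of mu.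
  Covering K by finitely many delta-balls and moving every point of K to the
  centre of a ball containing it (chosen measurably) replaces mu by a finitely
  supported probability measure sum_i p_i delta_{c_i}; uniform equicontinuity
  and boundedness of k make the two potentials differ by at most eps/2
  everywhere.  Rounding the weights to rationals q_i/m changes the potential by
  at most B sum_i |p_i - q_i/m| <= eps/2, and sum_i (q_i/m) delta_{c_i} is the
  empirical measure of the list repeating each c_i exactly q_i times.
*)
theory Submission
  imports Defs
begin

lemma sum_list_map_eq_sum_of_nat_count:
  fixes f :: "'a \<Rightarrow> 'b::comm_semiring_1"
  shows "sum_list (map f xs) = (\<Sum>x\<in>set xs. of_nat (count_list xs x) * f x)"
proof (induction xs)
  case (Cons x xs)
  have "(\<Sum>y\<in>set (x # xs). of_nat (count_list (x # xs) y) * f y)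
      = (\<Sum>y\<in>insert x (set xs). of_nat (count_list xs y) * f y + (if y = x then f y else 0))"
    by (intro sum.cong) (auto simp: algebra_simps)
  also have "\<dots> = f x + sum_list (map f xs)"
    by (cases "x \<in> set xs") (simp_all add: sum.distrib Cons.IH insert_absorb add.commute)
  finally show ?case
    by simp
qed simp

lemma integral_empirical_list:
  fixes g :: "'a \<Rightarrow> real"
  assumes "L \<noteq> []"
  shows "(\<integral>y. g y \<partial>empirical (length L) ((!) L)) = sum_list (map g L) / length L"
proof -
  have "(\<integral>y. g y \<partial>measure_pmf (pmf_of_multiset (mset L)))
      = (\<Sum>a\<in>set L. g a * pmf (pmf_of_multiset (mset L)) a)"
    by (rule integral_measure_pmf_real) (use assms in auto)
  also have "\<dots> = (\<Sum>a\<in>set L. count_list L a * g a) / length L"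
    using assms by (simp add: sum_divide_distrib count_mset mult.commute)
  also have "\<dots> = sum_list (map g L) / length L"
    by (simp add: sum_list_map_eq_sum_of_nat_count)
  finally show ?thesis
    by (simp add: empirical_def map_nth)
qed

lemma empirical_with_multiplicities:
  fixes q :: "nat \<Rightarrow> nat" and c :: "nat \<Rightarrow> 'a"
  assumes "0 < (\<Sum>i<N. q i)"
  obtains xs where "\<And>g :: 'a \<Rightarrow> real.
    (\<integral>y. g y \<partial>empirical (\<Sum>i<N. q i) xs) = (\<Sum>i<N. q i * g (c i)) / (\<Sum>i<N. q i)"
proof -
  define L where "L = concat (map (\<lambda>i. replicate (q i) (c i)) [0..<N])"
  have length_L: "length L = (\<Sum>i<N. q i)"
    unfolding L_def by (induction N) auto
  have sum_L: "sum_list (map g L) = (\<Sum>i<N. q i * g (c i))" for g :: "'a \<Rightarrow> real"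
    unfolding L_def by (induction N) (auto simp: sum_list_replicate)
  have "L \<noteq> []"
    using assms length_L by auto
  then show ?thesis
    using that[of "(!) L"] integral_empirical_list[of L] by (simp add: length_L sum_L)
qed

lemma sum_weighted_diff_le:
  fixes a b h :: "'i \<Rightarrow> real"
  assumes "\<And>i. i \<in> A \<Longrightarrow> \<bar>h i\<bar> \<le> B"
  shows "\<bar>(\<Sum>i\<in>A. a i * h i) - (\<Sum>i\<in>A. b i * h i)\<bar> \<le> B * (\<Sum>i\<in>A. \<bar>a i - b i\<bar>)"
proof -
  have "\<bar>(\<Sum>i\<in>A. a i * h i) - (\<Sum>i\<in>A. b i * h i)\<bar> = \<bar>\<Sum>i\<in>A. (a i - b i) * h i\<bar>"
    by (simp add: sum_subtractf left_diff_distrib)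
  also have "\<dots> \<le> (\<Sum>i\<in>A. \<bar>a i - b i\<bar> * \<bar>h i\<bar>)"
    using sum_abs[of "\<lambda>i. (a i - b i) * h i" A] by (simp only: abs_mult)
  also have "\<dots> \<le> (\<Sum>i\<in>A. \<bar>a i - b i\<bar> * B)"
    by (intro sum_mono mult_left_mono assms) auto
  finally show ?thesis
    by (simp add: sum_distrib_left mult.commute)
qed

lemma rational_approx_prob_vector:
  fixes p :: "nat \<Rightarrow> real"
  assumes nonneg: "\<And>i. i < N \<Longrightarrow> 0 \<le> p i" and sum_one: "(\<Sum>i<N. p i) = 1" and "e > 0"
  obtains q :: "nat \<Rightarrow> nat"
  where "0 < (\<Sum>i<N. q i)" "(\<Sum>i<N. \<bar>p i - q i / (\<Sum>j<N. q j)\<bar>) \<le> e"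
proof -
  define T :: nat where "T = nat \<lceil>2 * real N / e\<rceil> + N + 1"
  have T_gt: "real N < T" and T_ge: "2 * real N / e \<le> T"
    unfolding T_def by linarith+
  define q where "q i = nat \<lfloor>T * p i\<rfloor>" for i
  have q_le: "q i \<le> T * p i" if "i < N" for i
    unfolding q_def using nonneg[OF that] by simp
  have q_gt: "T * p i - 1 < q i" if "i < N" for i
    unfolding q_def using nonneg[OF that] by linarith
  define m where "m = (\<Sum>i<N. q i)"
  have m_le: "real m \<le> T"
  proof -
    have "real m \<le> (\<Sum>i<N. T * p i)"
      unfolding m_def of_nat_sum by (intro sum_mono q_le) simp
    then show ?thesis
      by (simp add: sum_distrib_left[symmetric] sum_one)
  qed
  have m_gt: "real T - N < m"
  proof -
    have "N > 0"
      using sum_one by (cases N) auto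
    then have "(\<Sum>i<N. T * p i - 1) < real m"
      unfolding m_def of_nat_sum by (intro sum_strict_mono q_gt) auto
    then show ?thesis
      by (simp add: sum_subtractf sum_distrib_left[symmetric] sum_one)
  qed
  have m_pos: "0 < real m"
    using m_gt T_gt by linarith
  \<comment> \<open>compare with q i / T; both error parts are nonnegative because m \<le> T\<close>
  have "(\<Sum>i<N. \<bar>p i - q i / m\<bar>) \<le> (\<Sum>i<N. (p i - q i / T) + (q i / m - q i / T))"
  proof (rule sum_mono)
    fix i assume "i \<in> {..<N}"
    then have "q i / T \<le> p i"
      using q_le T_gt by (simp add: divide_le_eq mult.commute)
    moreover have "q i / T \<le> q i / m"
      using m_le m_pos by (simp add: frac_le)
    ultimately show "\<bar>p i - q i / m\<bar> \<le> (p i - q i / T) + (q i / m - q i / T)"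
      by linarith
  qed
  also have "\<dots> = 2 * (1 - m / T)"
  proof -
    have "(\<Sum>i<N. q i / T) = m / T" and "(\<Sum>i<N. q i / m) = 1"
      using m_pos by (simp_all add: m_def sum_divide_distrib[symmetric])
    moreover have "(\<Sum>i<N. (p i - q i / T) + (q i / m - q i / T))
        = (\<Sum>i<N. p i) - (\<Sum>i<N. q i / T) + ((\<Sum>i<N. q i / m) - (\<Sum>i<N. q i / T))"
      by (simp only: sum.distrib sum_subtractf)
    ultimately show ?thesis
      by (simp add: sum_one)
  qed
  also have "\<dots> = 2 * (real T - m) / T"
    using T_gt by (simp add: field_simps)
  also have "\<dots> \<le> 2 * real N / T"
    using m_gt T_gt by (intro divide_right_mono) auto
  also have "\<dots> \<le> e"
    using T_ge T_gt \<open>e > 0\<close> by (simp add: field_simps)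
  finally have "(\<Sum>i<N. \<bar>p i - q i / (\<Sum>j<N. q j)\<bar>) \<le> e"
    by (simp only: m_def)
  moreover have "0 < (\<Sum>i<N. q i)"
    using m_pos unfolding m_def of_nat_0_less_iff .
  ultimately show ?thesis
    by (rule that[rotated])
qed

lemma empirical_approx_finite_mixture:
  fixes h :: "'b \<Rightarrow> 'a \<Rightarrow> real" and c :: "nat \<Rightarrow> 'a"
  assumes nonneg: "\<And>i. i < N \<Longrightarrow> 0 \<le> p i" and sum_one: "(\<Sum>i<N. p i) = 1"
    and bound: "\<And>x y. \<bar>h x y\<bar> \<le> B" and "e > 0"
  obtains m xs where "1 \<le> m"
    "\<And>x. \<bar>(\<Sum>i<N. p i * h x (c i)) - (\<integral>y. h x y \<partial>empirical m xs)\<bar> \<le> e"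
proof -
  have "0 \<le> B"
    using bound[of undefined undefined] by linarith
  then have "e / (B + 1) > 0"
    using \<open>e > 0\<close> by simp
  then obtain q :: "nat \<Rightarrow> nat" where q_pos: "0 < (\<Sum>i<N. q i)"
    and q_close: "(\<Sum>i<N. \<bar>p i - q i / (\<Sum>j<N. q j)\<bar>) \<le> e / (B + 1)"
    using rational_approx_prob_vector[OF nonneg sum_one] by blast
  define m where "m = (\<Sum>i<N. q i)"
  obtain xs where empirical: "\<And>g :: 'a \<Rightarrow> real. (\<integral>y. g y \<partial>empirical m xs) = (\<Sum>i<N. q i * g (c i)) / m"
    using empirical_with_multiplicities[OF q_pos] unfolding m_def by blast
  have "\<bar>(\<Sum>i<N. p i * h x (c i)) - (\<integral>y. h x y \<partial>empirical m xs)\<bar> \<le> e" for x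
  proof -
    have "(\<integral>y. h x y \<partial>empirical m xs) = (\<Sum>i<N. q i / m * h x (c i))"
      by (simp add: empirical sum_divide_distrib)
    then have "\<bar>(\<Sum>i<N. p i * h x (c i)) - (\<integral>y. h x y \<partial>empirical m xs)\<bar>
        \<le> B * (\<Sum>i<N. \<bar>p i - q i / m\<bar>)"
      using sum_weighted_diff_le[of "{..<N}" "\<lambda>i. h x (c i)" B p "\<lambda>i. q i / m"] bound by simp
    also have "\<dots> \<le> B * (e / (B + 1))"
      using q_close \<open>0 \<le> B\<close> by (intro mult_left_mono) (simp_all add: m_def)
    also have "\<dots> \<le> e"
      using \<open>e > 0\<close> \<open>0 \<le> B\<close> by (simp add: field_simps)
    finally show ?thesis .
  qed
  moreover have "1 \<le> m"
    using q_pos by (simp add: m_def)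
  ultimately show ?thesis
    using that by blast
qed

lemma sets_regular_borel_measure: "regular_borel_measure M \<Longrightarrow> sets M = sets borel"
  by (simp add: regular_borel_measure_def)

lemma space_regular_borel_measure: "regular_borel_measure M \<Longrightarrow> space M = UNIV"
  using sets_eq_imp_space_eq[OF sets_regular_borel_measure] by simp

lemma regular_borel_prob_tight:
  assumes reg: "regular_borel_measure M" and "prob_space M" and "\<eta> > 0"
  obtains K where "compact K" "measure M (- K) < \<eta>"
proof -
  interpret prob_space M by fact
  have "emeasure M UNIV = (SUP K \<in> {K. compact K \<and> K \<subseteq> UNIV}. emeasure M K)"
    using reg unfolding regular_borel_measure_def by (metis sets.top space_borel)
  moreover have "emeasure M UNIV = 1"
    using emeasure_space_1 space_regular_borel_measure[OF reg] by simp
  ultimately have "ennreal (1 - \<eta>) < (SUP K \<in> {K. compact K \<and> K \<subseteq> UNIV}. emeasure M K)"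
    using \<open>\<eta> > 0\<close> by (simp add: ennreal_lessI)
  then obtain K where "compact K" and K_large: "ennreal (1 - \<eta>) < emeasure M K"
    by (auto simp: less_SUP_iff)
  have K_sets: "K \<in> events"
    using \<open>compact K\<close> sets_regular_borel_measure[OF reg] by (simp add: compact_imp_closed)
  have "1 - \<eta> < prob K"
  proof (cases "0 \<le> 1 - \<eta>")
    case True
    then show ?thesis
      using K_large by (simp add: emeasure_eq_measure ennreal_less_iff)
  next
    case False
    then show ?thesis
      using measure_nonneg[of M K] by linarith
  qed
  then have "prob (- K) < \<eta>"
    using prob_compl[OF K_sets] space_regular_borel_measure[OF reg] by (simp add: Compl_eq_Diff_UNIV)
  then show ?thesis
    using \<open>compact K\<close> that by blast
qed

lemma compact_ball_selector:
  fixes K :: "'a::metric_space set"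
  assumes "compact K" "\<delta> > 0"
  obtains idx :: "'a \<Rightarrow> nat" and n :: nat and c :: "nat \<Rightarrow> 'a"
  where "idx \<in> borel \<rightarrow>\<^sub>M count_space UNIV" "\<And>y. idx y \<le> n"
    "\<And>y. y \<in> K \<Longrightarrow> idx y < n \<and> dist y (c (idx y)) < \<delta>"
proof -
  obtain C where "finite C" and C_cover: "K \<subseteq> (\<Union>z\<in>C. ball z \<delta>)"
    using \<open>compact K\<close> \<open>\<delta> > 0\<close> unfolding compact_eq_totally_bounded by blast
  then obtain cs where cs: "set cs = C"
    using finite_list by blast
  define n where "n = length cs"
  define Q where "Q i y \<longleftrightarrow> (i < n \<and> y \<in> K \<and> dist y (cs ! i) < \<delta>) \<or> i = n" for i y
  define idx where "idx y = (LEAST i. Q i y)" for y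
  have "(\<lambda>y. Q i y) \<in> borel \<rightarrow>\<^sub>M count_space UNIV" for i
  proof -
    have [measurable]: "K \<in> sets borel"
      using \<open>compact K\<close> by (simp add: compact_imp_closed)
    have [measurable]: "(\<lambda>y. dist y (cs ! i)) \<in> borel_measurable borel"
      by (intro borel_measurable_continuous_onI continuous_intros)
    show ?thesis
      unfolding Q_def by measurable
  qed
  then have "idx \<in> borel \<rightarrow>\<^sub>M count_space UNIV"
    unfolding idx_def by (rule measurable_Least)
  moreover have "idx y \<le> n" for y
    unfolding idx_def by (rule Least_le) (simp add: Q_def)
  moreover have "idx y < n \<and> dist y (cs ! idx y) < \<delta>" if "y \<in> K" for y
  proof -
    obtain z where "z \<in> set cs" "dist y z < \<delta>"
      using C_cover \<open>y \<in> K\<close> cs by (auto simp: dist_commute)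
    then obtain i where "i < n" "dist y (cs ! i) < \<delta>"
      by (auto simp: in_set_conv_nth n_def)
    then have "Q i y"
      using \<open>y \<in> K\<close> by (simp add: Q_def)
    then have "idx y \<le> i" and "Q (idx y) y"
      unfolding idx_def by (rule Least_le, rule LeastI)
    then show ?thesis
      using \<open>i < n\<close> by (auto simp: Q_def)
  qed
  ultimately show ?thesis
    using that[of idx n "(!) cs"] by blast
qed

lemma (in prob_space) integral_comp_finite_index:
  assumes idx: "idx \<in> M \<rightarrow>\<^sub>M count_space UNIV" and bound: "\<And>y. y \<in> space M \<Longrightarrow> idx y < N"
  obtains p where "\<And>i. 0 \<le> p i" "(\<Sum>i<N. p i) = 1"
    "\<And>f :: nat \<Rightarrow> real. (\<integral>y. f (idx y) \<partial>M) = (\<Sum>i<N. p i * f i)"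
proof -
  define p where "p i = prob (idx -` {i} \<inter> space M)" for i
  have "(\<integral>y. f (idx y) \<partial>M) = (\<Sum>i<N. p i * f i)" for f :: "nat \<Rightarrow> real"
  proof -
    have "(\<integral>y. f (idx y) \<partial>M) = (\<integral>y. (\<Sum>i<N. indicator (idx -` {i}) y * f i) \<partial>M)"
    proof (rule Bochner_Integration.integral_cong)
      fix y assume "y \<in> space M"
      then have "(\<Sum>i<N. indicator (idx -` {i}) y * f i) = (\<Sum>i<N. if i = idx y then f i else 0)"
        by (intro sum.cong) auto
      then show "f (idx y) = (\<Sum>i<N. indicator (idx -` {i}) y * f i)"
        using bound[OF \<open>y \<in> space M\<close>] by simp
    qed simp
    also have "\<dots> = (\<Sum>i<N. p i * f i)"
    proof -
      have "idx -` {i} \<inter> space M \<in> events" for i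
        using measurable_sets[OF idx, of "{i}"] by simp
      then have "integrable M (indicat_real (idx -` {i}))" for i
        by (simp add: integrable_indicator_iff emeasure_eq_measure)
      then show ?thesis
        unfolding p_def by (subst Bochner_Integration.integral_sum) auto
    qed
    finally show ?thesis .
  qed
  moreover from this[of "\<lambda>_. 1"] have "(\<Sum>i<N. p i) = 1"
    by (simp add: prob_space)
  ultimately show ?thesis
    using that[of p] by (simp add: p_def)
qed

lemma (in prob_space) abs_integral_diff_le_off_set:
  fixes f g :: "'a \<Rightarrow> real"
  assumes "f \<in> borel_measurable M" "g \<in> borel_measurable M"
    and f_bound: "\<And>y. \<bar>f y\<bar> \<le> B" and g_bound: "\<And>y. \<bar>g y\<bar> \<le> B"
    and "K \<in> events" "0 \<le> a" and close: "\<And>y. y \<in> K \<Longrightarrow> \<bar>f y - g y\<bar> \<le> a"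
  shows "\<bar>(\<integral>y. f y \<partial>M) - (\<integral>y. g y \<partial>M)\<bar> \<le> a + 2 * B * prob (space M - K)"
proof -
  have integrable: "integrable M f" "integrable M g"
    using assms(1,2) f_bound g_bound by (auto intro: integrable_const_bound[where B = B])
  have ind: "integrable M (indicat_real (space M - K))"
    using \<open>K \<in> events\<close> by (simp add: integrable_indicator_iff emeasure_eq_measure)
  have "\<bar>(\<integral>y. f y \<partial>M) - (\<integral>y. g y \<partial>M)\<bar> \<le> (\<integral>y. \<bar>f y - g y\<bar> \<partial>M)"
    using integrable by (simp flip: Bochner_Integration.integral_diff)
  also have "\<dots> \<le> (\<integral>y. a + 2 * B * indicator (space M - K) y \<partial>M)"
  proof (rule integral_mono)
    show "\<bar>f y - g y\<bar> \<le> a + 2 * B * indicator (space M - K) y" if "y \<in> space M" for y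
      using close f_bound[of y] g_bound[of y] that \<open>0 \<le> a\<close> by (cases "y \<in> K") auto
  qed (use integrable ind in auto)
  also have "\<dots> = a + 2 * B * prob (space M - K)"
    using ind by (simp add: prob_space Int_absorb2)
  finally show ?thesis .
qed

lemma regular_prob_kernel_discretization:
  fixes h :: "'b \<Rightarrow> 'a::metric_space \<Rightarrow> real"
  assumes prob: "prob_space M" and reg: "regular_borel_measure M"
    and bound: "\<And>x y. \<bar>h x y\<bar> \<le> B"
    and equicont: "\<And>e. e > 0 \<Longrightarrow> \<exists>\<delta>>0. \<forall>x y y'. dist y y' < \<delta> \<longrightarrow> \<bar>h x y - h x y'\<bar> < e"
    and "e > 0"
  obtains p :: "nat \<Rightarrow> real" and N :: nat and c :: "nat \<Rightarrow> 'a" where "\<And>i. 0 \<le> p i" "(\<Sum>i<N. p i) = 1"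
    "\<And>x. \<bar>(\<integral>y. h x y \<partial>M) - (\<Sum>i<N. p i * h x (c i))\<bar> \<le> e"
proof -
  interpret prob_space M by fact
  have space: "space M = UNIV" and sets: "sets M = sets borel"
    using reg by (simp_all add: space_regular_borel_measure sets_regular_borel_measure)
  have "0 \<le> B"
    using bound[of undefined undefined] by linarith
  obtain \<delta> where "\<delta> > 0" and \<delta>: "\<And>x y y'. dist y y' < \<delta> \<Longrightarrow> \<bar>h x y - h x y'\<bar> < e / 2"
    using equicont[of "e / 2"] \<open>e > 0\<close> by auto
  have "e / (4 * (B + 1)) > 0"
    using \<open>e > 0\<close> \<open>0 \<le> B\<close> by simp
  then obtain K where "compact K" and K_small: "prob (- K) < e / (4 * (B + 1))"
    by (rule regular_borel_prob_tight[OF reg prob])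
  then have "K \<in> events"
    using sets by (simp add: compact_imp_closed)
  obtain idx and n :: nat and c where idx_borel: "idx \<in> borel \<rightarrow>\<^sub>M count_space UNIV" and idx_le: "\<And>y. idx y \<le> n"
    and idx_close: "\<And>y. y \<in> K \<Longrightarrow> idx y < n \<and> dist y (c (idx y)) < \<delta>"
    using compact_ball_selector[OF \<open>compact K\<close> \<open>\<delta> > 0\<close>] by metis
  have idx_meas: "idx \<in> M \<rightarrow>\<^sub>M count_space UNIV"
    using idx_borel measurable_cong_sets[OF sets refl] by blast
  obtain p where "\<And>i. 0 \<le> p i" "(\<Sum>i<Suc n. p i) = 1"
    and integral_idx: "\<And>f :: nat \<Rightarrow> real. (\<integral>y. f (idx y) \<partial>M) = (\<Sum>i<Suc n. p i * f i)"
    using integral_comp_finite_index[OF idx_meas, of "Suc n"] idx_le by (metis less_Suc_eq_le)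
  moreover have "\<bar>(\<integral>y. h x y \<partial>M) - (\<Sum>i<Suc n. p i * h x (c i))\<bar> \<le> e" for x
  proof -
    have "continuous_on UNIV (h x)"
      unfolding continuous_on_iff dist_real_def using equicont by (metis dist_commute)
    then have "h x \<in> borel_measurable M"
      using borel_measurable_continuous_onI measurable_cong_sets[OF sets refl] by blast
    moreover have "(\<lambda>y. h x (c (idx y))) \<in> borel_measurable M"
      using measurable_compose[OF idx_meas, of "\<lambda>i. h x (c i)" borel] by simp
    moreover have "\<bar>h x y - h x (c (idx y))\<bar> \<le> e / 2" if "y \<in> K" for y
      using \<delta>[of y "c (idx y)" x] idx_close[OF that] by (auto intro: less_imp_le)
    ultimately have "\<bar>(\<integral>y. h x y \<partial>M) - (\<integral>y. h x (c (idx y)) \<partial>M)\<bar> \<le> e / 2 + 2 * B * prob (- K)"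
      using abs_integral_diff_le_off_set[of "h x" "\<lambda>y. h x (c (idx y))" B K "e / 2"] bound
        \<open>K \<in> events\<close> \<open>e > 0\<close> by (simp add: space Compl_eq_Diff_UNIV)
    also have "\<dots> \<le> e / 2 + 2 * B * (e / (4 * (B + 1)))"
      using K_small \<open>0 \<le> B\<close> by (intro add_left_mono mult_left_mono) auto
    also have "\<dots> \<le> e"
      using \<open>e > 0\<close> \<open>0 \<le> B\<close> by (simp add: field_simps)
    finally show ?thesis
      by (simp only: integral_idx[of "\<lambda>i. h x (c i)"])
  qed
  ultimately show ?thesis
    using that by blast
qed

theorem lemma3p3:
  fixes k :: "'a::metric_space \<Rightarrow> 'a \<Rightarrow> real"
    and M :: "'a measure"
    and \<epsilon> :: real
  assumes nonneg: "\<And>x y. k x y \<ge> 0"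
    and symm: "\<And>x y. k x y = k y x"
    and bdd: "\<exists>B. \<forall>x y. k x y \<le> B"
    and equicont: "\<And>e. e > 0 \<Longrightarrow> \<exists>\<delta>>0. \<forall>y x x'. dist x x' < \<delta> \<longrightarrow> \<bar>k x y - k x' y\<bar> < e"
    and prob: "prob_space M"
    and reg: "regular_borel_measure M"
    and eps: "\<epsilon> > 0"
  shows "\<exists>m::nat. m \<ge> 1 \<and> (\<exists>xs :: nat \<Rightarrow> 'a.
           \<forall>x. \<bar>potential k M x - potential k (empirical m xs) x\<bar> \<le> \<epsilon>)"
proof -
  obtain B where "\<And>x y. k x y \<le> B"
    using bdd by blast
  then have k_bound: "\<bar>k x y\<bar> \<le> B" for x y
    using nonneg[of x y] by simp
  have potential_swap: "potential k \<sigma> x = (\<integral>y. k y x \<partial>\<sigma>)" for \<sigma> x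
    unfolding potential_def by (intro arg_cong[where f = "integral\<^sup>L \<sigma>"] ext symm)
  obtain p and N :: nat and c where p_nonneg: "\<And>i. 0 \<le> p i" and p_sum: "(\<Sum>i<N. p i) = 1"
    and discrete: "\<And>x. \<bar>(\<integral>y. k y x \<partial>M) - (\<Sum>i<N. p i * k (c i) x)\<bar> \<le> \<epsilon> / 2"
    using regular_prob_kernel_discretization[OF prob reg, of "\<lambda>x y. k y x" B "\<epsilon> / 2"] k_bound equicont eps
    by auto
  obtain m xs where "1 \<le> m"
    and empirical: "\<And>x. \<bar>(\<Sum>i<N. p i * k (c i) x) - (\<integral>y. k y x \<partial>empirical m xs)\<bar> \<le> \<epsilon> / 2"
    using empirical_approx_finite_mixture[of N p "\<lambda>x y. k y x" B "\<epsilon> / 2" c] p_nonneg p_sum k_bound eps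
    by auto
  have "\<bar>potential k M x - potential k (empirical m xs) x\<bar> \<le> \<epsilon>" for x
    using discrete[of x] empirical[of x] unfolding potential_swap by linarith
  then show ?thesis
    using \<open>1 \<le> m\<close> by blast
qed

end
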